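(* Let $\psi$ be a finite conjunction of linear constraints, each of the form $\left(\sum_i d_i x_i\right)\odot n$ with integers $d_i,n$, database objects $x_i$, and $\odot\in\{=,<,\le\}$, and let $D$ be a database satisfying $\psi$. For each site $k\in\{1,\dots,K\}$ form the local treaty template $\varphi_{\Gamma_k}$ by replacing each clause $\left(\sum_i d_i x_i\right)\odot n$ of $\psi$ by $\left(\sum_{\mathit{Loc}(x_i)=k} d_i x_i + c\right)\odot n$, where $c$ is a fresh integer-valued configuration variable (distinct for each clause and each site). Then there exists an assignment of integer values to all configuration variables such that the resulting formulas $\varphi_{\Gamma_1},\dots,\varphi_{\Gamma_K}$ (which mention only objects located at the respective site) satisfy: (H1) for every database $D'$, $\bigwedge_{1\le k\le K}\varphi_{\Gamma_k}(D')$ implies $\psi(D')$; and (H2) $\varphi_{\Gamma_k}(D)$ holds for every $k=1,\dots,K$.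
   Context: A database is a map from a countably infinite set of objects to the integers with finite support; objects are assigned to sites $\{1,\dots,K\}$ by $\mathit{Loc}$, each object residing at exactly one site. A formula is evaluated on a database by substituting each object's value for the object. *)

theory Defs
  imports Main "HOL-Library.Countable"
begin

datatype cmp = CEq | CLt | CLe

fun cmp_holds :: "cmp \<Rightarrow> int \<Rightarrow> int \<Rightarrow> bool" where
  "cmp_holds CEq a b = (a = b)"
| "cmp_holds CLt a b = (a < b)"
| "cmp_holds CLe a b = (a \<le> b)"

datatype 'obj lin_constraint = LinC "(int \<times> 'obj) list" cmp int

definition is_database :: "('obj \<Rightarrow> int) \<Rightarrow> bool" where
  "is_database D \<longleftrightarrow> finite {x. D x \<noteq> 0}"

fun lin_sum :: "('obj \<Rightarrow> int) \<Rightarrow> (int \<times> 'obj) list \<Rightarrow> int" where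
  "lin_sum D ts = sum_list (map (\<lambda>(d, x). d * D x) ts)"

fun holds_constraint :: "('obj \<Rightarrow> int) \<Rightarrow> 'obj lin_constraint \<Rightarrow> bool" where
  "holds_constraint D (LinC ts op n) = cmp_holds op (lin_sum D ts) n"

definition holds_conj :: "('obj \<Rightarrow> int) \<Rightarrow> 'obj lin_constraint list \<Rightarrow> bool" where
  "holds_conj D psi \<longleftrightarrow> (\<forall>c \<in> set psi. holds_constraint D c)"

text \<open>Local treaty template for site k, instantiated with configuration values
  conf j k for clause j (index in psi) at site k:
  clause j becomes (sum over terms with Loc x_i = k of d_i x_i + conf j k) op n.\<close>
definition local_treaty ::
  "('obj \<Rightarrow> nat) \<Rightarrow> 'obj lin_constraint list \<Rightarrow> (nat \<Rightarrow> nat \<Rightarrow> int) \<Rightarrow> nat \<Rightarrow> ('obj \<Rightarrow> int) \<Rightarrow> bool" where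
  "local_treaty Loc psi conf k D \<longleftrightarrow>
     (\<forall>j < length psi. case psi ! j of LinC ts op n \<Rightarrow>
        cmp_holds op (lin_sum D (filter (\<lambda>(d, x). Loc x = k) ts) + conf j k) n)"

end

theory Submission
  imports Defs
begin

text \<open>Site 1 receives as configuration the contribution of all other sites in \<open>D\<close>; every
  other site \<open>k\<close> is told to keep its own contribution where it is in \<open>D\<close> (for \<open>=\<close>) or not
  to increase it (for \<open><\<close> and \<open>\<le>\<close>). If all sites obey, the left-hand side of each clause
  can only have moved in the harmless direction, so \<open>\<psi>\<close> still holds.\<close>

definition site_sum :: "('obj \<Rightarrow> nat) \<Rightarrow> ('obj \<Rightarrow> int) \<Rightarrow> nat \<Rightarrow> (int \<times> 'obj) list \<Rightarrow> int" where
  "site_sum Loc D k ts = lin_sum D (filter (\<lambda>(d, x). Loc x = k) ts)"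

lemma local_treaty_iff_site_sum:
  "local_treaty Loc psi conf k D \<longleftrightarrow>
     (\<forall>j < length psi. case psi ! j of LinC ts op n \<Rightarrow>
        cmp_holds op (site_sum Loc D k ts + conf j k) n)"
  unfolding local_treaty_def site_sum_def ..

lemma lin_sum_eq_sum_site_sum:
  assumes "finite A" and "\<forall>x. Loc x \<in> A"
  shows "lin_sum D ts = (\<Sum>k\<in>A. site_sum Loc D k ts)"
proof (induction ts)
  case Nil
  then show ?case by (simp add: site_sum_def)
next
  case (Cons a ts)
  obtain d x where a: "a = (d, x)" by (cases a)
  have "(\<Sum>k\<in>A. site_sum Loc D k (a # ts))
      = (\<Sum>k\<in>A. (if Loc x = k then d * D x else 0) + site_sum Loc D k ts)"
    by (rule sum.cong) (auto simp: a site_sum_def)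
  also have "\<dots> = d * D x + lin_sum D ts"
    using assms Cons by (simp add: sum.distrib)
  finally show ?case by (simp add: a)
qed

lemma lin_sum_eq_site_sum_1_plus:
  assumes "\<forall>x. Loc x \<in> {1..K}" and "1 \<le> K"
  shows "lin_sum D ts = site_sum Loc D 1 ts + (\<Sum>k\<in>{2..K}. site_sum Loc D k ts)"
proof -
  have "{1..K} = insert 1 {2..K}" using \<open>1 \<le> K\<close> by auto
  then show ?thesis using lin_sum_eq_sum_site_sum[of "{1..K}" Loc D ts] assms(1) by simp
qed

text \<open>For \<open><\<close> on integers, \<open>x + c < n\<close> with \<open>c = n - 1 - v\<close> is exactly \<open>x \<le> v\<close>.\<close>
definition tight_offset :: "cmp \<Rightarrow> int \<Rightarrow> int \<Rightarrow> int" where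
  "tight_offset op n v = (if op = CLt then n - 1 - v else n - v)"

lemma cmp_holds_tight_offset_iff:
  "cmp_holds op (x + tight_offset op n v) n \<longleftrightarrow> (if op = CEq then x = v else x \<le> v)"
  by (cases op) (auto simp: tight_offset_def)

lemma cmp_holds_decreasing:
  assumes "cmp_holds op a n" and "if op = CEq then b = a else b \<le> a"
  shows "cmp_holds op b n"
  using assms by (cases op) auto

definition treaty_offset ::
  "('obj \<Rightarrow> nat) \<Rightarrow> ('obj \<Rightarrow> int) \<Rightarrow> 'obj lin_constraint \<Rightarrow> nat \<Rightarrow> int" where
  "treaty_offset Loc D c k = (case c of LinC ts op n \<Rightarrow>
     if k = 1 then lin_sum D ts - site_sum Loc D 1 ts
     else tight_offset op n (site_sum Loc D k ts))"

lemma treaty_offset_holds: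
  assumes "cmp_holds op (lin_sum D ts) n"
  shows "cmp_holds op (site_sum Loc D k ts + treaty_offset Loc D (LinC ts op n) k) n"
  using assms by (simp add: treaty_offset_def cmp_holds_tight_offset_iff)

lemma treaty_offset_sound:
  assumes Loc: "\<forall>x. Loc x \<in> {1..K}" and "1 \<le> K"
    and local: "\<forall>k\<in>{1..K}.
      cmp_holds op (site_sum Loc D' k ts + treaty_offset Loc D (LinC ts op n) k) n"
  shows "cmp_holds op (lin_sum D' ts) n"
proof -
  let ?others = "\<lambda>E. \<Sum>k\<in>{2..K}. site_sum Loc E k ts"
  have "treaty_offset Loc D (LinC ts op n) 1 = ?others D"
    using lin_sum_eq_site_sum_1_plus[OF Loc \<open>1 \<le> K\<close>, of D ts]
    by (simp add: treaty_offset_def del: lin_sum.simps)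
  then have site_1: "cmp_holds op (site_sum Loc D' 1 ts + ?others D) n"
    using bspec[OF local, of 1] \<open>1 \<le> K\<close> by (metis atLeastAtMost_iff order_refl)
  have site_k: "if op = CEq then site_sum Loc D' k ts = site_sum Loc D k ts
                else site_sum Loc D' k ts \<le> site_sum Loc D k ts" if "k \<in> {2..K}" for k
  proof -
    have "k \<in> {1..K}" "k \<noteq> 1" using that by auto
    then show ?thesis
      using local cmp_holds_tight_offset_iff by (fastforce simp: treaty_offset_def)
  qed
  have "if op = CEq then ?others D' = ?others D else ?others D' \<le> ?others D"
    using site_k by (auto intro: sum.cong sum_mono split: if_splits)
  then have "cmp_holds op (site_sum Loc D' 1 ts + ?others D') n"
    by (intro cmp_holds_decreasing[OF site_1]) (auto split: if_splits)
  then show ?thesis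
    using lin_sum_eq_site_sum_1_plus[OF Loc \<open>1 \<le> K\<close>] by simp
qed

theorem theorem4p2:
  fixes Loc :: "'obj::countable \<Rightarrow> nat"
    and K :: nat
    and psi :: "'obj lin_constraint list"
    and D :: "'obj \<Rightarrow> int"
  assumes "infinite (UNIV :: 'obj set)"
    and "\<forall>x. Loc x \<in> {1..K}"
    and "is_database D"
    and "holds_conj D psi"
  shows "\<exists>conf :: nat \<Rightarrow> nat \<Rightarrow> int.
           (\<forall>D'. is_database D' \<longrightarrow>
                 (\<forall>k \<in> {1..K}. local_treaty Loc psi conf k D') \<longrightarrow> holds_conj D' psi)
         \<and> (\<forall>k \<in> {1..K}. local_treaty Loc psi conf k D)"
proof -
  define conf where "conf j k = treaty_offset Loc D (psi ! j) k" for j k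
  have "1 \<le> K" using assms(2) by (meson atLeastAtMost_iff le_trans)
  have sound: "holds_conj D' psi" if "\<forall>k \<in> {1..K}. local_treaty Loc psi conf k D'" for D'
    unfolding holds_conj_def
  proof
    fix c assume "c \<in> set psi"
    then obtain j where j: "j < length psi" "psi ! j = c" by (meson in_set_conv_nth)
    obtain ts op n where c: "c = LinC ts op n" by (cases c)
    show "holds_constraint D' c"
      using that j c treaty_offset_sound[OF assms(2) \<open>1 \<le> K\<close>, of op D' ts D n]
      by (fastforce simp: local_treaty_iff_site_sum conf_def)
  qed
  have "local_treaty Loc psi conf k D" for k
    unfolding local_treaty_iff_site_sum conf_def
  proof (intro allI impI)
    fix j assume "j < length psi"
    then have "holds_constraint D (psi ! j)" using assms(4) by (simp add: holds_conj_def)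
    then show "case psi ! j of LinC ts op n \<Rightarrow>
        cmp_holds op (site_sum Loc D k ts + treaty_offset Loc D (psi ! j) k) n"
      by (cases "psi ! j") (simp add: treaty_offset_holds)
  qed
  with sound show ?thesis by blast
qed

end
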